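(* Let $\phi\in\Phi$, let $f:\mathbb{R}^n\to(-\infty,+\infty]$ be proper lsc, $\Omega\subseteq\mathbb{R}^n$ closed, $\delta\ge0$, $p\in[1,\infty]$, and $\mathcal{J}=\{J_1,\dots,J_m\}$ a partition of $\{1,\dots,n\}$. Suppose the problem $$\textstyle (P)\quad \min_{x\in\mathbb{R}^n}\{\|G_{\mathcal{J},p}(x)\|_0:\ f(x)\le\delta,\ x\in\Omega\}$$ has a nonempty global optimal solution set and optimal value $s^*$. Consider $$\textstyle (Q)\quad \min_{x\in\mathbb{R}^n,w\in\mathbb{R}^m}\{\sum_{i=1}^m\phi(w_i):\ \langle e-w,G_{\mathcal{J},p}(x)\rangle=0,\ 0\le w\le e,\ x\in\Omega,\ f(x)\le\delta\}.$$ If $x^*$ is a global optimal solution of $(P)$, then $(x^*,\max(\mathrm{sgn}(G_{\mathcal{J},p}(x^* )),t^*e))$ (max taken componentwise) is a global optimal solution of $(Q)$ and the optimal value of $(Q)$ equals $s^*$; conversely, if $(x^*,w^* )$ is a global optimal solution of $(Q)$, then $x^*$ is a global optimal solution of $(P)$.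
   Context: $\Phi$ is the family of proper lsc functions $\phi:\mathbb{R}\to(-\infty,+\infty]$ with $\mathrm{int}(\mathrm{dom}\,\phi)\supseteq[0,1]$, convex on $[0,1]$, such that $\min_{t\in[0,1]}\phi(t)=0$ is attained at a (fixed) point $t^*\in[0,1)$, and $\phi(1)=1$. $G_{\mathcal{J},p}(x):=(\|x_{J_1}\|_p,\dots,\|x_{J_m}\|_p)^T$, where $x_{J_i}$ is the subvector of $x$ indexed by $J_i$; $\|v\|_0$ is the number of nonzero entries of $v$; $e$ is the all-ones vector; $\mathrm{sgn}$ is applied componentwise. *)

theory Defs
  imports "HOL-Analysis.Analysis" "HOL-Library.Extended_Real"
begin

definition lsc :: "('a::topological_space \<Rightarrow> ereal) \<Rightarrow> bool" where
  "lsc f \<longleftrightarrow> (\<forall>a::ereal. closed {x. f x \<le> a})"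

definition proper_fun :: "('a \<Rightarrow> ereal) \<Rightarrow> bool" where
  "proper_fun f \<longleftrightarrow> (\<forall>x. f x \<noteq> -\<infinity>) \<and> (\<exists>x. f x \<noteq> \<infinity>)"

definition in_Phi :: "(real \<Rightarrow> ereal) \<Rightarrow> real \<Rightarrow> bool" where
  "in_Phi \<phi> tstar \<longleftrightarrow>
     proper_fun \<phi> \<and> lsc \<phi> \<and>
     {0..1} \<subseteq> interior {t. \<phi> t \<noteq> \<infinity>} \<and>
     convex_on {0..1} (\<lambda>t. real_of_ereal (\<phi> t)) \<and>
     tstar \<in> {0..<1} \<and> \<phi> tstar = 0 \<and> (\<forall>t\<in>{0..1}. \<phi> tstar \<le> \<phi> t) \<and>
     \<phi> 1 = 1"

definition block_pnorm :: "ereal \<Rightarrow> (real^'n::finite) \<Rightarrow> 'n set \<Rightarrow> real" where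
  "block_pnorm p x J =
     (if p = \<infinity> then (if J = {} then 0 else Max ((\<lambda>j. \<bar>x$j\<bar>) ` J))
      else (\<Sum>j\<in>J. \<bar>x$j\<bar> powr real_of_ereal p) powr (1 / real_of_ereal p))"

definition G_map :: "('m::finite \<Rightarrow> 'n::finite set) \<Rightarrow> ereal \<Rightarrow> real^'n \<Rightarrow> real^'m" where
  "G_map J p x = (\<chi> i. block_pnorm p x (J i))"

definition l0norm :: "(real^'m::finite) \<Rightarrow> nat" where
  "l0norm v = card {i. v$i \<noteq> 0}"

definition feasP :: "(real^'n::finite \<Rightarrow> ereal) \<Rightarrow> real \<Rightarrow> (real^'n) set \<Rightarrow> real^'n \<Rightarrow> bool" where
  "feasP f \<delta> \<Omega> x \<longleftrightarrow> f x \<le> ereal \<delta> \<and> x \<in> \<Omega>"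

definition optP :: "('m::finite \<Rightarrow> 'n::finite set) \<Rightarrow> ereal \<Rightarrow> (real^'n::finite \<Rightarrow> ereal) \<Rightarrow> real \<Rightarrow> (real^'n) set \<Rightarrow> real^'n \<Rightarrow> bool" where
  "optP J p f \<delta> \<Omega> x \<longleftrightarrow> feasP f \<delta> \<Omega> x \<and>
     (\<forall>y. feasP f \<delta> \<Omega> y \<longrightarrow> l0norm (G_map J p x) \<le> l0norm (G_map J p y))"

definition valP :: "('m::finite \<Rightarrow> 'n::finite set) \<Rightarrow> ereal \<Rightarrow> (real^'n \<Rightarrow> ereal) \<Rightarrow> real \<Rightarrow> (real^'n) set \<Rightarrow> nat" where
  "valP J p f \<delta> \<Omega> = Inf {l0norm (G_map J p x) | x. feasP f \<delta> \<Omega> x}"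

definition feasQ :: "('m::finite \<Rightarrow> 'n::finite set) \<Rightarrow> ereal \<Rightarrow> (real^'n \<Rightarrow> ereal) \<Rightarrow> real \<Rightarrow> (real^'n) set
     \<Rightarrow> real^'n \<Rightarrow> real^'m \<Rightarrow> bool" where
  "feasQ J p f \<delta> \<Omega> x w \<longleftrightarrow>
     (1 - w) \<bullet> G_map J p x = 0 \<and> (\<forall>i. 0 \<le> w$i \<and> w$i \<le> 1) \<and> x \<in> \<Omega> \<and> f x \<le> ereal \<delta>"

definition objQ :: "(real \<Rightarrow> ereal) \<Rightarrow> (real^'m::finite) \<Rightarrow> ereal" where
  "objQ \<phi> w = (\<Sum>i\<in>UNIV. \<phi> (w$i))"

definition optQ :: "(real \<Rightarrow> ereal) \<Rightarrow> ('m::finite \<Rightarrow> 'n::finite set) \<Rightarrow> ereal \<Rightarrow> (real^'n \<Rightarrow> ereal) \<Rightarrow> real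
     \<Rightarrow> (real^'n) set \<Rightarrow> real^'n \<Rightarrow> real^'m \<Rightarrow> bool" where
  "optQ \<phi> J p f \<delta> \<Omega> x w \<longleftrightarrow> feasQ J p f \<delta> \<Omega> x w \<and>
     (\<forall>y v. feasQ J p f \<delta> \<Omega> y v \<longrightarrow> objQ \<phi> w \<le> objQ \<phi> v)"

definition valQ :: "(real \<Rightarrow> ereal) \<Rightarrow> ('m::finite \<Rightarrow> 'n::finite set) \<Rightarrow> ereal \<Rightarrow> (real^'n \<Rightarrow> ereal) \<Rightarrow> real
     \<Rightarrow> (real^'n) set \<Rightarrow> ereal" where
  "valQ \<phi> J p f \<delta> \<Omega> = (INF xw \<in> {(x, w). feasQ J p f \<delta> \<Omega> x w}. objQ \<phi> (snd xw))"

end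

theory Submission
  imports Defs
begin

text \<open>Every feasible pair of (Q) has objective at least the group sparsity of its \<open>x\<close>-part:
  complementarity forces \<open>w\<^sub>i = 1\<close> (hence \<open>\<phi>(w\<^sub>i) = 1\<close>) on the support of \<open>G(x)\<close>, while \<open>\<phi> \<ge> 0\<close>
  on \<open>[0,1]\<close>. Conversely, for any feasible \<open>x\<close> of (P) the weight \<open>max(sgn G(x), t\<^sup>*)\<close> equals \<open>1\<close> on
  the support and \<open>t\<^sup>*\<close> off it, so it is feasible for (Q) with objective exactly \<open>\<parallel>G(x)\<parallel>\<^sub>0\<close>.\<close>

lemma block_pnorm_nonneg: "block_pnorm p x J \<ge> 0"
proof (cases "p = \<infinity> \<and> J \<noteq> {}")
  case True
  then obtain j where "j \<in> J" by blast
  then have "\<bar>x$j\<bar> \<le> Max ((\<lambda>j. \<bar>x$j\<bar>) ` J)"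
    by (intro Max_ge) auto
  then show ?thesis using True unfolding block_pnorm_def by auto
qed (auto simp: block_pnorm_def)

lemma G_map_nonneg: "G_map J p x $ i \<ge> 0"
  by (simp add: G_map_def block_pnorm_nonneg)

lemma complementarity_eq_one:
  fixes w g :: "real^'m::finite"
  assumes "(1 - w) \<bullet> g = 0" "\<forall>k. w$k \<le> 1" "\<forall>k. 0 \<le> g$k" "g$i \<noteq> 0"
  shows "w$i = 1"
proof -
  have "(\<Sum>k\<in>UNIV. (1 - w$k) * g$k) = 0"
    using assms(1) by (simp add: inner_vec_def)
  moreover have "\<forall>k\<in>UNIV. 0 \<le> (1 - w$k) * g$k"
    using assms(2,3) by simp
  ultimately have "(1 - w$i) * g$i = 0"
    by (simp add: sum_nonneg_eq_0_iff)
  with assms(4) show ?thesis by simp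
qed

lemma in_Phi_nonneg: "in_Phi \<phi> tstar \<Longrightarrow> t \<in> {0..1} \<Longrightarrow> 0 \<le> \<phi> t"
  unfolding in_Phi_def by auto

lemma feasQ_imp_feasP: "feasQ J p f \<delta> \<Omega> x w \<Longrightarrow> feasP f \<delta> \<Omega> x"
  unfolding feasQ_def feasP_def by auto

lemma objQ_ge_l0norm:
  assumes nonneg: "\<And>t. t \<in> {0..1} \<Longrightarrow> 0 \<le> \<phi> t" and one: "\<phi> 1 = 1"
    and w01: "\<forall>i. w$i \<in> {0..1}" and support: "\<forall>i. g$i \<noteq> 0 \<longrightarrow> w$i = 1"
  shows "ereal (real (l0norm g)) \<le> objQ \<phi> w"
proof -
  let ?S = "{i. g$i \<noteq> 0}"
  have "ereal (real (l0norm g)) = (\<Sum>i\<in>?S. \<phi> (w$i))"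
    using support one by (simp add: l0norm_def sum_constant_ereal)
  also have "\<dots> \<le> (\<Sum>i\<in>UNIV. \<phi> (w$i))"
    using nonneg w01 by (intro sum_mono2) auto
  finally show ?thesis unfolding objQ_def .
qed

lemma feasQ_objQ_ge_l0norm:
  assumes "in_Phi \<phi> tstar" "feasQ J p f \<delta> \<Omega> x w"
  shows "ereal (real (l0norm (G_map J p x))) \<le> objQ \<phi> w"
proof (rule objQ_ge_l0norm)
  show "0 \<le> \<phi> t" if "t \<in> {0..1}" for t
    using in_Phi_nonneg[OF assms(1) that] .
  show "\<phi> 1 = 1" using assms(1) by (simp add: in_Phi_def)
  show "\<forall>i. w$i \<in> {0..1}" using assms(2) by (simp add: feasQ_def)
  show "\<forall>i. G_map J p x $ i \<noteq> 0 \<longrightarrow> w$i = 1"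
    using assms(2) by (auto simp: feasQ_def G_map_nonneg intro!: complementarity_eq_one)
qed

lemma max_sgn_eq:
  fixes g t :: real
  assumes "0 \<le> g" "t \<in> {0..1}"
  shows "max (sgn g) t = (if g = 0 then t else 1)"
  using assms by (auto simp: sgn_if)

lemma support_weight_feasQ_objQ:
  fixes J :: "'m::finite \<Rightarrow> 'n::finite set" and p :: ereal
  assumes phi: "in_Phi \<phi> tstar" and F: "feasP f \<delta> \<Omega> x"
  defines "w \<equiv> \<chi> i. max (sgn (G_map J p x $ i)) tstar"
  shows "feasQ J p f \<delta> \<Omega> x w" "objQ \<phi> w = ereal (real (l0norm (G_map J p x)))"
proof -
  let ?g = "G_map J p x"
  have t: "tstar \<in> {0..1}" "\<phi> tstar = 0" "\<phi> 1 = 1"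
    using phi unfolding in_Phi_def by auto
  have wi: "w$i = (if ?g$i = 0 then tstar else 1)" for i
    using max_sgn_eq[OF G_map_nonneg t(1), of J p x i] by (simp add: w_def)
  have "(1 - w) \<bullet> ?g = 0"
    unfolding inner_vec_def by (intro sum.neutral) (simp add: wi)
  then show "feasQ J p f \<delta> \<Omega> x w"
    using F t(1) by (simp add: feasQ_def feasP_def wi)
  have "objQ \<phi> w = (\<Sum>i\<in>{i. ?g$i \<noteq> 0}. 1)"
    unfolding objQ_def wi using t(2,3)
    by (simp add: if_distrib sum.If_cases Collect_neg_eq Compl_eq_Diff_UNIV)
  then show "objQ \<phi> w = ereal (real (l0norm ?g))"
    by (simp add: l0norm_def sum_constant_ereal)
qed


lemma valP_eq_l0norm_optP:
  "optP J p f \<delta> \<Omega> x \<Longrightarrow> valP J p f \<delta> \<Omega> = l0norm (G_map J p x)"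
  unfolding valP_def by (rule cInf_eq_minimum) (auto simp: optP_def)

lemma optP_objQ_lower_bound:
  assumes "in_Phi \<phi> tstar" "optP J p f \<delta> \<Omega> x" "feasQ J p f \<delta> \<Omega> y v"
  shows "ereal (real (l0norm (G_map J p x))) \<le> objQ \<phi> v"
proof -
  have "l0norm (G_map J p x) \<le> l0norm (G_map J p y)"
    using assms(2) feasQ_imp_feasP[OF assms(3)] by (simp add: optP_def)
  then have "ereal (real (l0norm (G_map J p x))) \<le> ereal (real (l0norm (G_map J p y)))"
    by simp
  also have "\<dots> \<le> objQ \<phi> v"
    by (rule feasQ_objQ_ge_l0norm[OF assms(1,3)])
  finally show ?thesis .
qed

lemma optP_imp_optQ:
  assumes phi: "in_Phi \<phi> tstar" and opt: "optP J p f \<delta> \<Omega> x"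
  shows "optQ \<phi> J p f \<delta> \<Omega> x (\<chi> i. max (sgn (G_map J p x $ i)) tstar)"
  using support_weight_feasQ_objQ[OF phi, of f \<delta> \<Omega> x J p] opt
    optP_objQ_lower_bound[OF phi opt]
  by (simp add: optQ_def optP_def)

lemma valQ_eq_valP:
  assumes phi: "in_Phi \<phi> tstar" and opt: "optP J p f \<delta> \<Omega> x"
  shows "valQ \<phi> J p f \<delta> \<Omega> = ereal (real (valP J p f \<delta> \<Omega>))"
  unfolding valQ_def valP_eq_l0norm_optP[OF opt]
proof (rule antisym)
  let ?w = "\<chi> i. max (sgn (G_map J p x $ i)) tstar"
  have "feasP f \<delta> \<Omega> x" using opt by (simp add: optP_def)
  note W = support_weight_feasQ_objQ[OF phi this, of J p]
  show "(INF xw\<in>{(x, w). feasQ J p f \<delta> \<Omega> x w}. objQ \<phi> (snd xw))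
      \<le> ereal (real (l0norm (G_map J p x)))"
    by (rule INF_lower2[of "(x, ?w)"]) (use W in auto)
  show "ereal (real (l0norm (G_map J p x)))
      \<le> (INF xw\<in>{(x, w). feasQ J p f \<delta> \<Omega> x w}. objQ \<phi> (snd xw))"
    by (rule INF_greatest) (auto intro: optP_objQ_lower_bound[OF phi opt])
qed

lemma optQ_imp_optP:
  assumes phi: "in_Phi \<phi> tstar" and opt: "optQ \<phi> J p f \<delta> \<Omega> x w"
  shows "optP J p f \<delta> \<Omega> x"
proof -
  have F: "feasQ J p f \<delta> \<Omega> x w" using opt by (simp add: optQ_def)
  have "l0norm (G_map J p x) \<le> l0norm (G_map J p y)" if "feasP f \<delta> \<Omega> y" for y
  proof -
    note W = support_weight_feasQ_objQ[OF phi that, of J p]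
    have "ereal (real (l0norm (G_map J p x))) \<le> objQ \<phi> w"
      by (rule feasQ_objQ_ge_l0norm[OF phi F])
    also have "\<dots> \<le> ereal (real (l0norm (G_map J p y)))"
      using opt W by (metis optQ_def)
    finally show ?thesis by simp
  qed
  with feasQ_imp_feasP[OF F] show ?thesis by (simp add: optP_def)
qed

theorem lemma3p1:
  fixes \<phi> :: "real \<Rightarrow> ereal" and tstar :: real
    and f :: "real^'n \<Rightarrow> ereal" and \<Omega> :: "(real^'n) set" and \<delta> :: real and p :: ereal
    and J :: "'m::finite \<Rightarrow> 'n::finite set" and sstar :: nat
  assumes phi: "in_Phi \<phi> tstar"
    and f_proper: "proper_fun f" and f_lsc: "lsc f"
    and \<Omega>_closed: "closed \<Omega>"
    and \<delta>_nonneg: "\<delta> \<ge> 0"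
    and p_ge: "1 \<le> p"
    and J_part: "disjoint_family J" "(\<Union>i. J i) = UNIV" "\<forall>i. J i \<noteq> {}"
    and P_solvable: "\<exists>x. optP J p f \<delta> \<Omega> x"
    and sstar_def: "sstar = valP J p f \<delta> \<Omega>"
  shows "(\<forall>xs. optP J p f \<delta> \<Omega> xs \<longrightarrow>
            optQ \<phi> J p f \<delta> \<Omega> xs (\<chi> i. max (sgn (G_map J p xs $ i)) tstar) \<and>
            valQ \<phi> J p f \<delta> \<Omega> = ereal (real sstar))
       \<and> (\<forall>xs ws. optQ \<phi> J p f \<delta> \<Omega> xs ws \<longrightarrow> optP J p f \<delta> \<Omega> xs)"
  using optP_imp_optQ[OF phi] valQ_eq_valP[OF phi] optQ_imp_optP[OF phi] sstar_def
  by blast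

end
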